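(* The cycle $C_3\cong K_3$ is not a strict prime $k$th-power distance graph for any integer $k\ge 2$.
   Context: A graph $G$ is a strict prime $k$th-power distance graph if there is an injective map $L:V(G)\to\mathbb{Z}$ such that for every edge $uv$ of $G$, $|L(u)-L(v)|=p^k$ for some prime $p$ (the prime may depend on the edge). *)

theory Defs
  imports "HOL-Computational_Algebra.Primes"
begin

text \<open>A graph is given by a vertex set V and a symmetric irreflexive edge relation E
  on V.\<close>

definition strict_prime_power_distance_graph ::
  "nat \<Rightarrow> 'a set \<Rightarrow> ('a \<Rightarrow> 'a \<Rightarrow> bool) \<Rightarrow> bool" where
  "strict_prime_power_distance_graph k V E \<longleftrightarrow>
     (\<exists>L :: 'a \<Rightarrow> int. inj_on L V \<and>
        (\<forall>u\<in>V. \<forall>v\<in>V. E u v \<longrightarrow> (\<exists>p::nat. prime p \<and> \<bar>L u - L v\<bar> = int p ^ k)))"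

definition K3_vertices :: "nat set" where
  "K3_vertices = {0, 1, 2}"

definition K3_edge :: "nat \<Rightarrow> nat \<Rightarrow> bool" where
  "K3_edge u v \<longleftrightarrow> u \<in> K3_vertices \<and> v \<in> K3_vertices \<and> u \<noteq> v"

end

theory Submission
  imports Defs
begin

text \<open>Labels of a triangle on the integer line have one label between the other two, so one
  edge length is the sum of the other two, giving \<open>p\<^sup>k + q\<^sup>k = r\<^sup>k\<close> for primes \<open>p, q, r\<close>.
  By parity one of \<open>p, q\<close> is 2 and \<open>r\<close> is odd; then \<open>r \<ge> q + 2\<close>, and
  \<open>(q + 2)\<^sup>k > q\<^sup>k + 2\<^sup>k\<close> for \<open>k \<ge> 2\<close>.\<close>

lemma power_add_less_power_add:
  fixes a b :: nat
  assumes "a > 0" "b > 0" "k \<ge> 2"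
  shows "a ^ k + b ^ k < (a + b) ^ k"
  using assms(3)
proof (induction k rule: dec_induct)
  case base
  then show ?case using assms by (simp add: power2_eq_square algebra_simps)
next
  case (step n)
  have "a ^ Suc n + b ^ Suc n \<le> (a + b) * (a ^ n + b ^ n)"
    by (simp add: algebra_simps)
  also have "\<dots> < (a + b) * (a + b) ^ n"
    using step assms by simp
  finally show ?case by simp
qed

lemma prime_even_eq_2: "prime (p :: nat) \<Longrightarrow> even p \<Longrightarrow> p = 2"
  using prime_odd_nat[of p] prime_ge_2_nat[of p] by linarith

lemma two_power_add_odd_power_neq:
  fixes q r :: nat
  assumes "odd q" "odd r" "k \<ge> 2"
  shows "2 ^ k + q ^ k \<noteq> r ^ k"
proof
  assume sum: "2 ^ k + q ^ k = r ^ k"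
  then have "q ^ k < r ^ k" by (metis less_add_same_cancel2 zero_less_numeral zero_less_power)
  then have "q < r" using power_less_imp_less_base by blast
  with assms(1,2) have "q + 2 \<le> r" by presburger
  then have "(q + 2) ^ k \<le> r ^ k" by (simp add: power_mono)
  moreover have "q ^ k + 2 ^ k < (q + 2) ^ k"
    using power_add_less_power_add[of q 2 k] assms by (simp add: odd_pos)
  ultimately show False using sum by linarith
qed

lemma prime_power_add_neq:
  fixes p q r :: nat
  assumes "prime p" "prime q" "prime r" "k \<ge> 2"
  shows "p ^ k + q ^ k \<noteq> r ^ k"
proof
  assume sum: "p ^ k + q ^ k = r ^ k"
  have k: "k > 0" using assms(4) by simp
  have "p ^ k \<ge> 2 ^ k" "q ^ k \<ge> 2 ^ k"
    using assms(1,2) by (simp_all add: power_mono prime_ge_2_nat)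
  then have "r ^ k \<ge> 2 ^ k + 2 ^ k" using sum by linarith
  then have "r ^ k > 2 ^ k" using zero_less_power[of "2::nat" k] by linarith
  then have "r \<noteq> 2" by auto
  then have "odd r" using prime_even_eq_2 assms(3) by blast
  then have "odd (p ^ k + q ^ k)" using sum k by simp
  then have "odd p \<noteq> odd q" using k by auto
  then consider "p = 2" "odd q" | "q = 2" "odd p"
    using prime_even_eq_2 assms(1,2) by blast
  then show False
    using two_power_add_odd_power_neq[OF _ \<open>odd r\<close> assms(4)] sum
    by cases (simp_all add: add.commute)
qed

lemma int_prime_power_add_neq:
  fixes p q r :: nat
  assumes "prime p" "prime q" "prime r" "k \<ge> 2"
  shows "int p ^ k + int q ^ k \<noteq> int r ^ k"
  using prime_power_add_neq[OF assms] by (metis of_nat_add of_nat_eq_iff of_nat_power)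

lemma abs_diff_betweenness:
  fixes a b c :: int
  obtains "\<bar>a - c\<bar> = \<bar>a - b\<bar> + \<bar>b - c\<bar>"
        | "\<bar>a - b\<bar> = \<bar>a - c\<bar> + \<bar>b - c\<bar>"
        | "\<bar>b - c\<bar> = \<bar>a - b\<bar> + \<bar>a - c\<bar>"
  by linarith

theorem mainTheorem11:
  fixes k :: nat
  assumes "k \<ge> 2"
  shows "\<not> strict_prime_power_distance_graph k K3_vertices K3_edge"
proof
  assume "strict_prime_power_distance_graph k K3_vertices K3_edge"
  then obtain L :: "nat \<Rightarrow> int" where
    edge: "\<And>u v. K3_edge u v \<Longrightarrow> \<exists>p. prime p \<and> \<bar>L u - L v\<bar> = int p ^ k"
    unfolding strict_prime_power_distance_graph_def K3_edge_def by blast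
  have "K3_edge 0 1" "K3_edge 1 2" "K3_edge 0 2"
    by (simp_all add: K3_edge_def K3_vertices_def)
  then obtain p q r where
    p: "prime p" "\<bar>L 0 - L 1\<bar> = int p ^ k" and
    q: "prime q" "\<bar>L 1 - L 2\<bar> = int q ^ k" and
    r: "prime r" "\<bar>L 0 - L 2\<bar> = int r ^ k"
    by (meson edge)
  show False
  proof (cases rule: abs_diff_betweenness[where a = "L 0" and b = "L 1" and c = "L 2"])
    case 1
    then have "int p ^ k + int q ^ k = int r ^ k" using p q r by linarith
    with int_prime_power_add_neq[OF p(1) q(1) r(1) assms] show False ..
  next
    case 2
    then have "int r ^ k + int q ^ k = int p ^ k" using p q r by linarith
    with int_prime_power_add_neq[OF r(1) q(1) p(1) assms] show False ..
  next
    case 3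
    then have "int p ^ k + int r ^ k = int q ^ k" using p q r by linarith
    with int_prime_power_add_neq[OF p(1) r(1) q(1) assms] show False ..
  qed
qed

end
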